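(* Given any member of an IQP$^*$ circuit family, there is an efficient (polynomial-size) implementation of it in MBQC in which all single-qubit measurements are in fixed bases and are non-adaptive. That is, the measurements can be performed simultaneously, and linear classical post-processing of the outcomes yields exactly the output distribution of the IQP$^*$ circuit.
   Context: IQP$^*$ circuit family. The family is indexed by the input length $n$. For input $x\in\{0,1\}^n$, the circuit proceeds as follows. - It acts on $q=\mathrm{poly}(n)$ qubits prepared in $|x\rangle|0\rangle^{\otimes(q-n)}$. - It applies a unitary $U_n$, which depends only on $n$. $U_n$ is a product of $\mathrm{poly}(n)$ gates $D(\theta_z,z)=e^{i\theta_z X[z]}$. - In each gate, $z\in\{0,1\}^q$, $X[z]=\bigotimes_j X^{z_j}$ with $X$ the Pauli-$X$ operator, and $\theta_z\in(0,2\pi]$ has a $\mathrm{poly}(n)$-size description. - It measures every qubit in the computational basis. MBQC. A multi-qubit resource state (e.g. a cluster/graph state, made by preparing qubits in $|+\rangle$ and applying controlled-$Z$ gates) is prepared. Single-qubit projective measurements are then performed on it, and the outcomes are processed by linear classical side-processing (XOR and NOT gates). Non-adaptive means no measurement basis depends on the outcomes of other measurements. *)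

theory Defs
  imports Complex_Main
begin

text \<open>Bit strings are boolean lists; a state on k qubits is a function from
  bit strings (of length k) to complex amplitudes.\<close>

definition bits :: "nat \<Rightarrow> bool list set" where
  "bits k = {s. length s = k}"

definition xor_list :: "bool list \<Rightarrow> bool list \<Rightarrow> bool list" where
  "xor_list a b = map2 (\<noteq>) a b"

text \<open>Gate D(theta,z) = exp(i theta X[z]); since X[z]^2 = I this equals
  cos theta I + i sin theta X[z], and X[z] maps basis state y to y xor z.\<close>

definition gate_apply :: "real \<times> bool list \<Rightarrow> (bool list \<Rightarrow> complex) \<Rightarrow> (bool list \<Rightarrow> complex)" where
  "gate_apply g \<psi> = (\<lambda>y. complex_of_real (cos (fst g)) * \<psi> y
        + \<i> * complex_of_real (sin (fst g)) * \<psi> (xor_list y (snd g)))"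

definition iqp_init :: "bool list \<Rightarrow> nat \<Rightarrow> (bool list \<Rightarrow> complex)" where
  "iqp_init x q = (\<lambda>y. if y = x @ replicate (q - length x) False then 1 else 0)"

definition iqp_prob :: "(real \<times> bool list) list \<Rightarrow> nat \<Rightarrow> bool list \<Rightarrow> bool list \<Rightarrow> real" where
  "iqp_prob gates q x y = (cmod (fold gate_apply gates (iqp_init x q) y))\<^sup>2"

definition iqp_circuit :: "nat \<Rightarrow> nat \<Rightarrow> (real \<times> bool list) list \<Rightarrow> bool" where
  "iqp_circuit n q gates \<longleftrightarrow> n \<le> q \<and>
     (\<forall>g \<in> set gates. length (snd g) = q \<and> 0 < fst g \<and> fst g \<le> 2 * pi)"

definition simple_graph :: "nat \<Rightarrow> (nat \<Rightarrow> nat \<Rightarrow> bool) \<Rightarrow> bool" where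
  "simple_graph m E \<longleftrightarrow> (\<forall>i j. E i j \<longrightarrow> i < m \<and> j < m \<and> i \<noteq> j \<and> E j i)"

text \<open>Graph state: prepare |+> on every vertex and apply CZ on every edge:
  amplitude of t is (-1)^(number of edges whose endpoints are both 1) / sqrt(2^m).\<close>
definition graph_state :: "nat \<Rightarrow> (nat \<Rightarrow> nat \<Rightarrow> bool) \<Rightarrow> bool list \<Rightarrow> complex" where
  "graph_state m E t = complex_of_real
     ((-1) ^ card {(i, j). i < j \<and> j < m \<and> E i j \<and> t ! i \<and> t ! j} / sqrt (2 ^ m))"

text \<open>Single-qubit measurement bases: b j k is the k-th basis vector (a vector in C^2,
  indexed by bool) of the measurement on qubit j; must be orthonormal.\<close>
definition onb_bases :: "nat \<Rightarrow> (nat \<Rightarrow> bool \<Rightarrow> bool \<Rightarrow> complex) \<Rightarrow> bool" where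
  "onb_bases m b \<longleftrightarrow> (\<forall>j < m. \<forall>k k'.
      (\<Sum>t\<in>UNIV. cnj (b j k t) * b j k' t) = (if k = k' then 1 else 0))"

definition mbqc_outcome_prob :: "nat \<Rightarrow> (nat \<Rightarrow> nat \<Rightarrow> bool) \<Rightarrow> (nat \<Rightarrow> bool \<Rightarrow> bool \<Rightarrow> complex)
     \<Rightarrow> bool list \<Rightarrow> real" where
  "mbqc_outcome_prob m E b s = (cmod (\<Sum>t\<in>bits m.
      (\<Prod>j<m. cnj (b j (s ! j) (t ! j))) * graph_state m E t))\<^sup>2"

definition lin_post :: "nat \<Rightarrow> nat \<Rightarrow> nat \<Rightarrow> (nat \<Rightarrow> nat \<Rightarrow> bool) \<Rightarrow> (nat \<Rightarrow> nat \<Rightarrow> bool)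
     \<Rightarrow> (nat \<Rightarrow> bool) \<Rightarrow> bool list \<Rightarrow> bool list \<Rightarrow> bool list" where
  "lin_post q m n A B c x s = map (\<lambda>i. (c i \<noteq> odd (card {j. j < m \<and> A i j \<and> s ! j}))
        \<noteq> odd (card {j. j < n \<and> B i j \<and> x ! j})) [0..<q]"

definition mbqc_prob :: "nat \<Rightarrow> nat \<Rightarrow> nat \<Rightarrow> (nat \<Rightarrow> nat \<Rightarrow> bool) \<Rightarrow> (nat \<Rightarrow> bool \<Rightarrow> bool \<Rightarrow> complex)
     \<Rightarrow> (nat \<Rightarrow> nat \<Rightarrow> bool) \<Rightarrow> (nat \<Rightarrow> nat \<Rightarrow> bool) \<Rightarrow> (nat \<Rightarrow> bool)
     \<Rightarrow> bool list \<Rightarrow> bool list \<Rightarrow> real" where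
  "mbqc_prob q m n E b A B c x y =
     (\<Sum>s\<in>{s \<in> bits m. lin_post q m n A B c x s = y}. mbqc_outcome_prob m E b s)"

end

theory Submission imports Defs begin

text \<open>Each gate \<open>D(\<theta>, z)\<close> is diagonal in the Hadamard basis, where it multiplies \<open>|u\<rangle>\<close> by
  \<open>cos \<theta> + i sin \<theta> (-1)^(z\<cdot>u)\<close>. Take the graph with one vertex per circuit qubit and one per
  gate, joining the vertex of gate \<open>g\<close> to the qubits in the support of \<open>z_g\<close>. Measure the qubit
  vertices in the X basis and the vertex of gate \<open>g\<close> in a basis rotated by \<open>\<theta>_g\<close>: summing out
  that vertex produces the factor \<open>cos \<theta>_g + i sin \<theta>_g (-1)^(z_g\<cdot>u)\<close>, times the byproduct
  \<open>(-1)^(z_g\<cdot>u)\<close> when its outcome is 1. The byproducts are X corrections on the output, and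
  \<open>U\<close> commutes with every \<open>X[w]\<close>, so XORing each qubit outcome with the parity of the adjacent
  gate outcomes and with the input bit gives \<open>y\<close> with probability \<open>|\<langle>y|U|x,0\<rangle>|^2\<close>: each of the
  \<open>2^L\<close> patterns of gate outcomes contributes \<open>|\<langle>y|U|x,0\<rangle>|^2 / 2^L\<close>.\<close>

definition parity_sign :: "bool \<Rightarrow> complex" where
  "parity_sign b = (if b then -1 else 1)"

lemma parity_sign_xor: "parity_sign (a \<noteq> b) = parity_sign a * parity_sign b"
  by (simp add: parity_sign_def)

lemma parity_sign_mult_self: "parity_sign a * parity_sign a = 1"
  by (simp add: parity_sign_def)

lemma cnj_parity_sign: "cnj (parity_sign a) = parity_sign a"
  by (simp add: parity_sign_def)

lemma parity_sign_eq_iff: "parity_sign a = parity_sign b \<longleftrightarrow> a = b"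
  by (simp add: parity_sign_def)

lemma minus_one_power_eq_parity_sign: "(-1::complex) ^ n = parity_sign (odd n)"
  by (simp add: parity_sign_def minus_one_power_iff)

lemma prod_parity_sign:
  "finite G \<Longrightarrow> (\<Prod>j\<in>G. parity_sign (P j)) = parity_sign (odd (card {j\<in>G. P j}))"
proof (induction G rule: finite_induct)
  case empty
  then show ?case by (simp add: parity_sign_def)
next
  case (insert x F)
  have "{j\<in>insert x F. P j} = (if P x then insert x {j\<in>F. P j} else {j\<in>F. P j})"
    by auto
  then have "card {j\<in>insert x F. P j} = (if P x then Suc (card {j\<in>F. P j}) else card {j\<in>F. P j})"
    using insert by auto
  then show ?case
    using insert by (auto simp: parity_sign_def)
qed

lemma prod_parity_sign_lessThan:
  "(\<Prod>j<(m::nat). parity_sign (P j)) = parity_sign (odd (card {j. j < m \<and> P j}))"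
  using prod_parity_sign[of "{..<m}" P] by simp

lemma prod_lessThan_add:
  "(\<Prod>j<(q::nat)+L. f j) = (\<Prod>j<q. f j) * (\<Prod>g<L. (f (q+g) :: 'a::comm_monoid_mult))"
  by (induction L) (simp_all add: mult.assoc)

definition walsh_char :: "nat \<Rightarrow> (nat \<Rightarrow> bool) \<Rightarrow> bool list \<Rightarrow> complex" where
  "walsh_char q w u = (\<Prod>i<q. parity_sign (w i \<and> u!i))"

lemma walsh_char_mult_self: "walsh_char q w u * walsh_char q w u = 1"
  by (simp add: walsh_char_def prod.distrib[symmetric] parity_sign_mult_self)

lemma walsh_char_xor: "walsh_char q (\<lambda>i. v i \<noteq> w i) u = walsh_char q v u * walsh_char q w u"
  unfolding walsh_char_def prod.distrib[symmetric]
  by (rule prod.cong) (auto simp: parity_sign_def)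

lemma walsh_char_cong: "(\<And>i. i < q \<Longrightarrow> v i = w i) \<Longrightarrow> walsh_char q v u = walsh_char q w u"
  unfolding walsh_char_def by (rule prod.cong) auto

lemma mem_bits_iff: "s \<in> bits k \<longleftrightarrow> length s = k"
  by (simp add: bits_def)

lemma finite_bits [simp]: "finite (bits q)"
  using finite_lists_length_eq[of "UNIV::bool set" q] by (simp add: bits_def)

lemma card_bits: "card (bits q) = 2 ^ q"
  using card_lists_length_eq[of "UNIV::bool set" q] by (simp add: bits_def)

lemma bits_Suc: "bits (Suc L) = (\<lambda>(b,v). b#v) ` (UNIV \<times> bits L)"
  by (auto simp: bits_def image_iff) (metis Suc_length_conv)

lemma sum_bits_prod:
  fixes h :: "nat \<Rightarrow> bool \<Rightarrow> 'a::comm_semiring_1"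
  shows "(\<Sum>v\<in>bits L. \<Prod>g<L. h g (v!g)) = (\<Prod>g<L. h g False + h g True)"
proof (induction L arbitrary: h)
  case 0
  then show ?case by (simp add: bits_def)
next
  case (Suc L)
  have inj: "inj_on (\<lambda>(b,v). b#v) (UNIV \<times> bits L)" by (auto simp: inj_on_def)
  have "(\<Sum>v\<in>bits (Suc L). \<Prod>g<Suc L. h g (v!g))
      = (\<Sum>(b,v)\<in>UNIV \<times> bits L. \<Prod>g<Suc L. h g ((b#v)!g))"
    unfolding bits_Suc by (subst sum.reindex[OF inj]) (simp add: case_prod_unfold)
  also have "\<dots> = (\<Sum>b\<in>UNIV. \<Sum>v\<in>bits L. h 0 b * (\<Prod>g<L. h (Suc g) (v!g)))"
    by (subst sum.cartesian_product[symmetric])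
       (simp del: prod.lessThan_Suc add: prod.lessThan_Suc_shift)
  also have "\<dots> = (\<Sum>b\<in>UNIV. h 0 b * (\<Prod>g<L. h (Suc g) False + h (Suc g) True))"
    by (simp add: sum_distrib_left[symmetric] Suc[of "\<lambda>g. h (Suc g)"])
  also have "\<dots> = (\<Prod>g<Suc L. h g False + h g True)"
    by (simp del: prod.lessThan_Suc add: UNIV_bool prod.lessThan_Suc_shift distrib_right)
  finally show ?case .
qed

lemma bits_add: "bits (a+b) = (\<lambda>(u,v). u@v) ` (bits a \<times> bits b)"
  by (auto simp: bits_def image_iff)
     (metis append_take_drop_id length_drop length_take min.absorb2 le_add1 add_diff_cancel_left')

lemma sum_bits_add: "(\<Sum>t\<in>bits (a+b). f t) = (\<Sum>u\<in>bits a. \<Sum>v\<in>bits b. f (u@v))"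
proof -
  have "inj_on (\<lambda>(u,v). u@v) (bits a \<times> bits b)" by (auto simp: inj_on_def bits_def)
  then show ?thesis unfolding bits_add
    by (subst sum.reindex) (simp_all add: sum.cartesian_product case_prod_unfold)
qed

lemma sum_walsh_char: "(\<Sum>u\<in>bits q. walsh_char q w u) = (if \<forall>i<q. \<not> w i then 2^q else 0)"
proof -
  have "(\<Sum>u\<in>bits q. walsh_char q w u)
      = (\<Prod>i<q. parity_sign (w i \<and> False) + parity_sign (w i \<and> True))"
    unfolding walsh_char_def by (rule sum_bits_prod)
  also have "\<dots> = (\<Prod>i<q. if w i then 0 else 2)"
    by (rule prod.cong) (auto simp: parity_sign_def)
  finally show ?thesis by auto
qed

lemma card_bits_prefix_determined:
  "card {s \<in> bits (q + L). \<forall>i<q. s!i = F (drop q s) i} = 2 ^ L"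
proof -
  let ?S = "{s \<in> bits (q + L). \<forall>i<q. s!i = F (drop q s) i}"
  let ?extend = "\<lambda>c. map (F c) [0..<q] @ c"
  have "bij_betw (drop q) ?S (bits L)"
  proof (rule bij_betw_byWitness[where f' = ?extend])
    show "\<forall>s\<in>?S. ?extend (drop q s) = s"
    proof
      fix s assume "s \<in> ?S"
      then show "?extend (drop q s) = s"
        by (intro nth_equalityI) (auto simp: bits_def nth_append)
    qed
  qed (auto simp: bits_def nth_append)
  then show ?thesis by (simp add: bij_betw_same_card card_bits)
qed

section \<open>The IQP circuit in the Hadamard basis\<close>

definition gate_phase :: "nat \<Rightarrow> real \<times> bool list \<Rightarrow> bool list \<Rightarrow> complex" where
  "gate_phase q g u = complex_of_real (cos (fst g))
     + \<i> * complex_of_real (sin (fst g)) * walsh_char q (\<lambda>i. snd g ! i) u"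

text \<open>\<open>iqp_fourier_amp q gs w\<close> is \<open>\<langle>y|U|y'\<rangle>\<close> for \<open>w = y \<oplus> y'\<close>.\<close>

definition iqp_fourier_amp :: "nat \<Rightarrow> (real \<times> bool list) list \<Rightarrow> (nat \<Rightarrow> bool) \<Rightarrow> complex" where
  "iqp_fourier_amp q gs w =
     (\<Sum>u\<in>bits q. walsh_char q w u * prod_list (map (\<lambda>g. gate_phase q g u) gs)) / 2^q"

lemma iqp_fourier_amp_cong:
  "(\<And>i. i < q \<Longrightarrow> v i = w i) \<Longrightarrow> iqp_fourier_amp q gs v = iqp_fourier_amp q gs w"
  unfolding iqp_fourier_amp_def using walsh_char_cong[of q v w] by simp

lemma fold_gate_apply_basis_state:
  assumes "\<forall>g\<in>set gs. length (snd g) = q" and "length w = q" and "y \<in> bits q"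
  shows "fold gate_apply gs (\<lambda>y. if y = w then 1 else 0) y
       = iqp_fourier_amp q gs (\<lambda>i. y!i \<noteq> w!i)"
  using assms
proof (induction gs arbitrary: y rule: rev_induct)
  case Nil
  have "(y = w) = (\<forall>i<q. \<not> (y!i \<noteq> w!i))"
    using Nil.prems by (auto simp: mem_bits_iff list_eq_iff_nth_eq)
  then show ?case by (simp add: iqp_fourier_amp_def sum_walsh_char)
next
  case (snoc g gs)
  let ?A = "fold gate_apply gs (\<lambda>y. if y = w then 1 else 0)"
  let ?P = "\<lambda>u. prod_list (map (\<lambda>g. gate_phase q g u) gs)"
  let ?w = "\<lambda>i. y!i \<noteq> w!i"
  let ?z = "\<lambda>i. snd g ! i"
  let ?y' = "xor_list y (snd g)"
  have lz: "length (snd g) = q" using snoc.prems by simp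
  have ly: "length y = q" using snoc.prems by (simp add: mem_bits_iff)
  have y': "?y' \<in> bits q" using lz ly by (simp add: mem_bits_iff xor_list_def)
  have IH: "?A y = iqp_fourier_amp q gs ?w"
    "?A ?y' = iqp_fourier_amp q gs (\<lambda>i. ?y' ! i \<noteq> w!i)"
    using snoc.IH[OF _ snoc.prems(2,3)] snoc.IH[OF _ snoc.prems(2) y'] snoc.prems(1) by simp_all
  have flip: "walsh_char q (\<lambda>i. ?y' ! i \<noteq> w!i) u = walsh_char q ?w u * walsh_char q ?z u"
    for u
  proof -
    have "walsh_char q (\<lambda>i. ?y' ! i \<noteq> w!i) u = walsh_char q (\<lambda>i. ?w i \<noteq> ?z i) u"
      by (rule walsh_char_cong) (auto simp: xor_list_def lz ly)
    then show ?thesis by (simp only: walsh_char_xor)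
  qed
  have "fold gate_apply (gs @ [g]) (\<lambda>y. if y = w then 1 else 0) y
      = complex_of_real (cos (fst g)) * ?A y + \<i> * complex_of_real (sin (fst g)) * ?A ?y'"
    by (simp add: gate_apply_def)
  also have "\<dots> = (\<Sum>u\<in>bits q. walsh_char q ?w u * ?P u * gate_phase q g u) / 2^q"
    unfolding IH iqp_fourier_amp_def flip gate_phase_def
    by (simp add: sum_distrib_left sum.distrib add_divide_distrib algebra_simps)
  also have "\<dots> = iqp_fourier_amp q (gs @ [g]) ?w"
    by (simp add: iqp_fourier_amp_def mult.assoc)
  finally show ?case .
qed

section \<open>The resource graph state and its measurement\<close>

text \<open>Vertices \<open>0..<q\<close> are the circuit qubits and vertex \<open>q + g\<close> is gate \<open>g\<close>.\<close>

definition gate_graph :: "nat \<Rightarrow> (real \<times> bool list) list \<Rightarrow> nat \<Rightarrow> nat \<Rightarrow> bool" where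
  "gate_graph q gs i j \<longleftrightarrow>
     (i < q \<and> q \<le> j \<and> j < q + length gs \<and> snd (gs!(j-q)) ! i) \<or>
     (j < q \<and> q \<le> i \<and> i < q + length gs \<and> snd (gs!(i-q)) ! j)"

lemma simple_graph_gate_graph: "simple_graph (q + length gs) (gate_graph q gs)"
  by (auto simp: simple_graph_def gate_graph_def)

lemma graph_state_eq_prod:
  "graph_state m E t
     = (\<Prod>i<m. \<Prod>j<m. parity_sign (i < j \<and> E i j \<and> t!i \<and> t!j)) / complex_of_real (sqrt (2^m))"
proof -
  have "{(i, j). i < j \<and> j < m \<and> E i j \<and> t!i \<and> t!j}
      = {p \<in> {..<m} \<times> {..<m}. case p of (i, j) \<Rightarrow> i < j \<and> E i j \<and> t!i \<and> t!j}"
    by auto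
  then have "(-1::complex) ^ card {(i, j). i < j \<and> j < m \<and> E i j \<and> t!i \<and> t!j}
      = (\<Prod>(i, j) \<in> {..<m} \<times> {..<m}. parity_sign (i < j \<and> E i j \<and> t!i \<and> t!j))"
    by (simp add: minus_one_power_eq_parity_sign prod_parity_sign case_prod_unfold)
  then show ?thesis
    by (simp add: graph_state_def prod.cartesian_product)
qed

lemma graph_state_gate_graph:
  assumes "length u = q"
  shows "graph_state (q + length gs) (gate_graph q gs) (u@v)
     = (\<Prod>g<length gs. if v!g then walsh_char q (\<lambda>i. snd (gs!g) ! i) u else 1)
        / complex_of_real (sqrt (2^(q + length gs)))"
proof -
  define L where "L = length gs"
  define P where "P i j \<longleftrightarrow> i < j \<and> gate_graph q gs i j \<and> (u@v)!i \<and> (u@v)!j" for i j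
  have "(\<Prod>i<q+L. \<Prod>j<q+L. parity_sign (P i j)) = (\<Prod>i<q. \<Prod>j<q+L. parity_sign (P i j))"
  proof -
    have "(\<Prod>g<L. \<Prod>j<q+L. parity_sign (P (q+g) j)) = 1"
      by (intro prod.neutral ballI) (auto simp: P_def gate_graph_def parity_sign_def)
    then show ?thesis by (simp add: prod_lessThan_add)
  qed
  also have "\<dots> = (\<Prod>i<q. \<Prod>g<L. parity_sign (snd (gs!g) ! i \<and> u!i \<and> v!g))"
  proof (rule prod.cong[OF refl])
    fix i assume i: "i \<in> {..<q}"
    have "(\<Prod>j<q. parity_sign (P i j)) = 1"
      by (intro prod.neutral ballI) (auto simp: P_def gate_graph_def parity_sign_def)
    moreover have "(\<Prod>g<L. parity_sign (P i (q+g)))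
        = (\<Prod>g<L. parity_sign (snd (gs!g) ! i \<and> u!i \<and> v!g))"
      by (rule prod.cong[OF refl])
         (use i assms in \<open>auto simp: P_def gate_graph_def L_def nth_append\<close>)
    ultimately show "(\<Prod>j<q+L. parity_sign (P i j))
        = (\<Prod>g<L. parity_sign (snd (gs!g) ! i \<and> u!i \<and> v!g))"
      by (simp add: prod_lessThan_add)
  qed
  also have "\<dots> = (\<Prod>g<L. \<Prod>i<q. parity_sign (snd (gs!g) ! i \<and> u!i \<and> v!g))"
    by (rule prod.swap)
  also have "\<dots> = (\<Prod>g<L. if v!g then walsh_char q (\<lambda>i. snd (gs!g) ! i) u else 1)"
    by (rule prod.cong[OF refl]) (auto simp: walsh_char_def parity_sign_def)
  finally show ?thesis
    unfolding graph_state_eq_prod P_def L_def by simp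
qed

text \<open>Outcome \<open>k\<close> at a gate vertex projects onto \<open>cos \<theta> |k\<rangle> - i sin \<theta> |\<not>k\<rangle>\<close>; qubit vertices
  are measured in the X basis.\<close>

definition rotated_basis :: "real \<Rightarrow> bool \<Rightarrow> bool \<Rightarrow> complex" where
  "rotated_basis \<theta> k \<beta> = (if k = \<beta> then complex_of_real (cos \<theta>) else - \<i> * complex_of_real (sin \<theta>))"

definition gate_bases :: "nat \<Rightarrow> (real \<times> bool list) list \<Rightarrow> nat \<Rightarrow> bool \<Rightarrow> bool \<Rightarrow> complex" where
  "gate_bases q gs j k \<beta> =
     (if j < q then parity_sign (k \<and> \<beta>) * complex_of_real (1 / sqrt 2)
      else rotated_basis (fst (gs!(j-q))) k \<beta>)"

lemma onb_bases_gate_bases: "onb_bases (q + length gs) (gate_bases q gs)"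
  unfolding onb_bases_def
proof (intro allI impI)
  fix j k k'
  show "(\<Sum>t\<in>UNIV. cnj (gate_bases q gs j k t) * gate_bases q gs j k' t) = (if k = k' then 1 else 0)"
  proof (cases "j < q")
    case True
    have "complex_of_real (1 / sqrt 2) * complex_of_real (1 / sqrt 2) = 1/2"
      by (simp flip: of_real_mult)
    with True show ?thesis
      by (cases k; cases k') (auto simp: gate_bases_def UNIV_bool parity_sign_def)
  next
    case False
    define \<theta> where "\<theta> = fst (gs ! (j - q))"
    have "complex_of_real (cos \<theta>) * complex_of_real (cos \<theta>)
        + complex_of_real (sin \<theta>) * complex_of_real (sin \<theta>) = 1"
      by (simp flip: of_real_mult of_real_add)
    with False show ?thesis
      by (cases k; cases k')
         (auto simp: gate_bases_def rotated_basis_def UNIV_bool \<theta>_def[symmetric] algebra_simps)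
  qed
qed

definition byproduct_parity :: "(real \<times> bool list) list \<Rightarrow> bool list \<Rightarrow> nat \<Rightarrow> bool" where
  "byproduct_parity gs c i \<longleftrightarrow> odd (card {g. g < length gs \<and> snd (gs!g) ! i \<and> c!g})"

lemma prod_byproduct_walsh_char:
  "(\<Prod>g<length gs. if c!g then walsh_char q (\<lambda>i. snd (gs!g) ! i) u else 1)
     = walsh_char q (byproduct_parity gs c) u"
proof -
  have "(\<Prod>g<length gs. if c!g then walsh_char q (\<lambda>i. snd (gs!g) ! i) u else 1)
      = (\<Prod>g<length gs. \<Prod>i<q. parity_sign ((snd (gs!g) ! i \<and> c!g) \<and> u!i))"
    by (rule prod.cong[OF refl]) (auto simp: walsh_char_def parity_sign_def)
  also have "\<dots> = (\<Prod>i<q. \<Prod>g<length gs. parity_sign ((snd (gs!g) ! i \<and> c!g) \<and> u!i))"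
    by (rule prod.swap)
  also have "\<dots> = (\<Prod>i<q. parity_sign (byproduct_parity gs c i \<and> u!i))"
  proof (rule prod.cong[OF refl])
    fix i
    have "(\<Prod>g<length gs. parity_sign (snd (gs!g) ! i \<and> c!g)) = parity_sign (byproduct_parity gs c i)"
      unfolding prod_parity_sign_lessThan byproduct_parity_def by (simp add: conj_assoc)
    then show "(\<Prod>g<length gs. parity_sign ((snd (gs!g) ! i \<and> c!g) \<and> u!i))
        = parity_sign (byproduct_parity gs c i \<and> u!i)"
      by (cases "u!i") (simp_all add: parity_sign_def)
  qed
  finally show ?thesis by (simp add: walsh_char_def)
qed

lemma prod_cnj_gate_bases:
  assumes "length u = q" and "length s = q + length gs"
  shows "(\<Prod>j<q + length gs. cnj (gate_bases q gs j (s!j) ((u@v)!j)))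
     = walsh_char q (\<lambda>i. s!i) u * complex_of_real (1 / sqrt 2) ^ q
       * (\<Prod>g<length gs. cnj (rotated_basis (fst (gs!g)) (drop q s ! g) (v!g)))"
proof -
  define r where "r = complex_of_real (1 / sqrt 2)"
  have "(\<Prod>j<q. cnj (gate_bases q gs j (s!j) ((u@v)!j))) = (\<Prod>j<q. parity_sign (s!j \<and> u!j) * r)"
    by (rule prod.cong[OF refl]) (simp add: gate_bases_def nth_append assms cnj_parity_sign r_def)
  also have "\<dots> = walsh_char q (\<lambda>i. s!i) u * r ^ q"
    by (simp add: prod.distrib walsh_char_def)
  finally have "(\<Prod>j<q. cnj (gate_bases q gs j (s!j) ((u@v)!j))) = walsh_char q (\<lambda>i. s!i) u * r ^ q" .
  moreover have "(\<Prod>g<length gs. cnj (gate_bases q gs (q+g) (s!(q+g)) ((u@v)!(q+g))))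
      = (\<Prod>g<length gs. cnj (rotated_basis (fst (gs!g)) (drop q s ! g) (v!g)))"
    by (rule prod.cong[OF refl]) (simp add: gate_bases_def nth_append assms)
  ultimately show ?thesis
    unfolding r_def by (simp only: prod_lessThan_add)
qed

text \<open>Summing out a gate vertex with outcome \<open>c\<close>; \<open>X\<close> will be the character \<open>(-1)^(z\<cdot>u)\<close>.\<close>

lemma rotated_basis_sum:
  assumes "X * X = 1"
  shows "cnj (rotated_basis \<theta> c False) + cnj (rotated_basis \<theta> c True) * X
       = (if c then X else 1) * (complex_of_real (cos \<theta>) + \<i> * complex_of_real (sin \<theta>) * X)"
proof (cases c)
  case True
  have "\<i> * complex_of_real (sin \<theta>) = \<i> * complex_of_real (sin \<theta>) * (X * X)"
    using assms by simp
  with True show ?thesis by (simp add: rotated_basis_def algebra_simps)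
qed (simp add: rotated_basis_def algebra_simps)

lemma sum_bits_rotated_basis:
  assumes "\<And>g. X g * X g = 1"
  shows "(\<Sum>v\<in>bits L.
            (\<Prod>g<L. cnj (rotated_basis (\<theta> g) (c!g) (v!g))) * (\<Prod>g<L. if v!g then X g else 1))
     = (\<Prod>g<L. (if c!g then X g else 1)
          * (complex_of_real (cos (\<theta> g)) + \<i> * complex_of_real (sin (\<theta> g)) * X g))"
proof -
  have "(\<Sum>v\<in>bits L.
            (\<Prod>g<L. cnj (rotated_basis (\<theta> g) (c!g) (v!g))) * (\<Prod>g<L. if v!g then X g else 1))
      = (\<Sum>v\<in>bits L. \<Prod>g<L.
            (\<lambda>g \<beta>. cnj (rotated_basis (\<theta> g) (c!g) \<beta>) * (if \<beta> then X g else 1)) g (v!g))"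
    by (simp add: prod.distrib)
  also have "\<dots> = (\<Prod>g<L.
      cnj (rotated_basis (\<theta> g) (c!g) False) + cnj (rotated_basis (\<theta> g) (c!g) True) * X g)"
    by (subst sum_bits_prod) simp
  finally show ?thesis
    by (simp add: rotated_basis_sum[OF assms])
qed

lemma inverse_sqrt_two_power_div:
  "(1 / sqrt 2) ^ q / sqrt (2 ^ (q + L)) = 1 / (2 ^ q * sqrt (2 ^ L))"
proof -
  have "sqrt (2 ^ (q + L)) = sqrt 2 ^ q * sqrt (2 ^ L)"
    by (simp add: power_add real_sqrt_mult real_sqrt_power)
  moreover have "sqrt 2 ^ q * sqrt 2 ^ q = (2::real) ^ q"
    by (simp add: power_mult_distrib[symmetric])
  ultimately show ?thesis
    by (simp add: power_one_over mult.assoc[symmetric])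
qed

lemma sum_gate_vertices:
  assumes u: "length u = q" and s: "length s = q + length gs"
  shows "(\<Sum>v\<in>bits (length gs). (\<Prod>j<q + length gs. cnj (gate_bases q gs j (s!j) ((u@v)!j)))
             * graph_state (q + length gs) (gate_graph q gs) (u@v))
     = walsh_char q (\<lambda>i. s!i \<noteq> byproduct_parity gs (drop q s) i) u
        * prod_list (map (\<lambda>g. gate_phase q g u) gs)
        * complex_of_real (1 / (2 ^ q * sqrt (2 ^ length gs)))"
proof -
  define L where "L = length gs"
  define c where "c = drop q s"
  define k where "k = complex_of_real (1 / sqrt 2) ^ q / complex_of_real (sqrt (2 ^ (q + L)))"
  have k: "k = complex_of_real (1 / (2 ^ q * sqrt (2 ^ L)))"
    unfolding k_def inverse_sqrt_two_power_div[symmetric] by (metis of_real_divide of_real_power)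
  have "(\<Sum>v\<in>bits L. (\<Prod>j<q+L. cnj (gate_bases q gs j (s!j) ((u@v)!j)))
          * graph_state (q+L) (gate_graph q gs) (u@v))
      = walsh_char q (\<lambda>i. s!i) u * k * (\<Sum>v\<in>bits L.
          (\<Prod>g<L. cnj (rotated_basis (fst (gs!g)) (c!g) (v!g)))
          * (\<Prod>g<L. if v!g then walsh_char q (\<lambda>i. snd (gs!g) ! i) u else 1))"
    unfolding sum_distrib_left
    by (rule sum.cong[OF refl])
       (simp add: prod_cnj_gate_bases graph_state_gate_graph u s L_def c_def k_def)
  also have "\<dots> = walsh_char q (\<lambda>i. s!i) u * k
      * (\<Prod>g<L. (if c!g then walsh_char q (\<lambda>i. snd (gs!g) ! i) u else 1) * gate_phase q (gs!g) u)"
    by (simp add: sum_bits_rotated_basis walsh_char_mult_self gate_phase_def)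
  also have "\<dots> = walsh_char q (\<lambda>i. s!i) u * walsh_char q (byproduct_parity gs c) u
      * prod_list (map (\<lambda>g. gate_phase q g u) gs) * k"
    by (simp add: prod.distrib prod.list_conv_set_nth atLeast0LessThan L_def
        prod_byproduct_walsh_char)
  finally show ?thesis
    by (simp add: k L_def c_def flip: walsh_char_xor)
qed

lemma mbqc_outcome_prob_gate_graph:
  assumes "s \<in> bits (q + length gs)"
  shows "mbqc_outcome_prob (q + length gs) (gate_graph q gs) (gate_bases q gs) s
       = (cmod (iqp_fourier_amp q gs (\<lambda>i. s!i \<noteq> byproduct_parity gs (drop q s) i)))\<^sup>2
         / 2 ^ length gs"
proof -
  define w where "w = (\<lambda>i. s!i \<noteq> byproduct_parity gs (drop q s) i)"
  define k where "k = complex_of_real (1 / (2 ^ q * sqrt (2 ^ length gs)))"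
  have "(\<Sum>t\<in>bits (q + length gs). (\<Prod>j<q + length gs. cnj (gate_bases q gs j (s!j) (t!j)))
          * graph_state (q + length gs) (gate_graph q gs) t)
      = (\<Sum>u\<in>bits q. walsh_char q w u * prod_list (map (\<lambda>g. gate_phase q g u) gs) * k)"
    unfolding sum_bits_add using assms
    by (intro sum.cong refl) (simp add: sum_gate_vertices mem_bits_iff w_def k_def)
  also have "\<dots> = iqp_fourier_amp q gs w * complex_of_real (1 / sqrt (2 ^ length gs))"
    by (simp add: iqp_fourier_amp_def k_def sum_divide_distrib)
  finally show ?thesis
    unfolding mbqc_outcome_prob_def w_def by (simp add: norm_divide power_divide)
qed

section \<open>Classical post-processing\<close>

text \<open>Column \<open>j \<ge> q + length gs\<close> is never
  read by \<open>lin_post\<close>, so the junk value \<open>gs ! (j - q)\<close> there is harmless.\<close>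

definition correction_matrix :: "nat \<Rightarrow> (real \<times> bool list) list \<Rightarrow> nat \<Rightarrow> nat \<Rightarrow> bool" where
  "correction_matrix q gs i j \<longleftrightarrow> j = i \<or> (q \<le> j \<and> snd (gs!(j-q)) ! i)"

lemma odd_card_correction_matrix:
  assumes "i < q" and "length s = q + length gs"
  shows "odd (card {j. j < q + length gs \<and> correction_matrix q gs i j \<and> s!j})
     \<longleftrightarrow> s!i \<noteq> byproduct_parity gs (drop q s) i"
proof -
  have "parity_sign (odd (card {j. j < q + length gs \<and> correction_matrix q gs i j \<and> s!j}))
      = (\<Prod>j<q. parity_sign (j = i \<and> s!j))
        * (\<Prod>g<length gs. parity_sign (snd (gs!g) ! i \<and> drop q s ! g))"
    unfolding prod_parity_sign_lessThan[symmetric] prod_lessThan_add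
    by (intro arg_cong2[where f="(*)"] prod.cong refl)
       (use assms in \<open>auto simp: correction_matrix_def\<close>)
  also have "{j. j < q \<and> j = i \<and> s!j} = (if s!i then {i} else {})"
    using assms by auto
  then have "(\<Prod>j<q. parity_sign (j = i \<and> s!j)) = parity_sign (s!i)"
    by (simp add: prod_parity_sign_lessThan)
  also have "(\<Prod>g<length gs. parity_sign (snd (gs!g) ! i \<and> drop q s ! g))
      = parity_sign (byproduct_parity gs (drop q s) i)"
    by (simp add: prod_parity_sign_lessThan byproduct_parity_def)
  finally show ?thesis
    by (simp add: parity_sign_eq_iff flip: parity_sign_xor)
qed

lemma lin_post_correction_nth:
  assumes "length s = q + length gs" and "length x = n" and "n \<le> q" and "i < q"
  shows "lin_post q (q + length gs) n (correction_matrix q gs) (\<lambda>i j. i = j) (\<lambda>_. False) x s ! i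
     \<longleftrightarrow> (s!i \<noteq> byproduct_parity gs (drop q s) i) \<noteq> (x @ replicate (q-n) False) ! i"
proof -
  have "{j. j < n \<and> i = j \<and> x!j} = (if i < n \<and> x!i then {i} else {})" by auto
  then have input: "odd (card {j. j < n \<and> i = j \<and> x!j}) = (x @ replicate (q-n) False) ! i"
    using assms by (auto simp: nth_append)
  have "lin_post q (q + length gs) n (correction_matrix q gs) (\<lambda>i j. i = j) (\<lambda>_. False) x s ! i
     \<longleftrightarrow> odd (card {j. j < q + length gs \<and> correction_matrix q gs i j \<and> s!j})
         \<noteq> odd (card {j. j < n \<and> i = j \<and> x!j})"
    using assms(4) by (simp add: lin_post_def del: odd_card_imp_not_empty)
  then show ?thesis
    unfolding input odd_card_correction_matrix[OF assms(4,1)] .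
qed

lemma lin_post_correction_eq_iff:
  assumes "s \<in> bits (q + length gs)" and "x \<in> bits n" and "n \<le> q" and "y \<in> bits q"
  shows "lin_post q (q + length gs) n (correction_matrix q gs) (\<lambda>i j. i = j) (\<lambda>_. False) x s = y
     \<longleftrightarrow> (\<forall>i<q. s!i = ((y!i \<noteq> (x @ replicate (q-n) False) ! i) \<noteq> byproduct_parity gs (drop q s) i))"
proof -
  have "length (lin_post q (q + length gs) n (correction_matrix q gs) (\<lambda>i j. i = j) (\<lambda>_. False) x s) = q"
    by (simp add: lin_post_def)
  with assms show ?thesis
    unfolding list_eq_iff_nth_eq using lin_post_correction_nth[of s q gs x n]
    by (auto simp: mem_bits_iff)
qed

lemma mbqc_prob_gate_graph:
  assumes "n \<le> q" and "\<forall>g\<in>set gs. length (snd g) = q" and x: "x \<in> bits n" and y: "y \<in> bits q"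
  shows "mbqc_prob q (q + length gs) n (gate_graph q gs) (gate_bases q gs)
           (correction_matrix q gs) (\<lambda>i j. i = j) (\<lambda>_. False) x y
       = iqp_prob gs q x y"
proof -
  define x0 where "x0 = x @ replicate (q-n) False"
  define w where "w = (\<lambda>i. y!i \<noteq> x0!i)"
  define p where "p = (cmod (iqp_fourier_amp q gs w))\<^sup>2"
  define S where "S = {s \<in> bits (q + length gs).
    lin_post q (q + length gs) n (correction_matrix q gs) (\<lambda>i j. i = j) (\<lambda>_. False) x s = y}"
  have S: "S = {s \<in> bits (q + length gs). \<forall>i<q. s!i = (w i \<noteq> byproduct_parity gs (drop q s) i)}"
    using lin_post_correction_eq_iff[OF _ x assms(1) y] by (auto simp: S_def w_def x0_def)
  have "mbqc_outcome_prob (q + length gs) (gate_graph q gs) (gate_bases q gs) s = p / 2 ^ length gs"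
    if "s \<in> S" for s
  proof -
    have "iqp_fourier_amp q gs (\<lambda>i. s!i \<noteq> byproduct_parity gs (drop q s) i) = iqp_fourier_amp q gs w"
      using that by (intro iqp_fourier_amp_cong) (auto simp: S)
    with that show ?thesis
      by (simp add: mbqc_outcome_prob_gate_graph S p_def)
  qed
  then have "mbqc_prob q (q + length gs) n (gate_graph q gs) (gate_bases q gs)
           (correction_matrix q gs) (\<lambda>i j. i = j) (\<lambda>_. False) x y = card S * (p / 2 ^ length gs)"
    by (simp add: mbqc_prob_def S_def[symmetric])
  also have "card S = 2 ^ length gs"
    unfolding S by (rule card_bits_prefix_determined)
  also have "p = iqp_prob gs q x y"
  proof -
    have "iqp_init x q = (\<lambda>y. if y = x0 then 1 else 0)"
      using x by (simp add: iqp_init_def x0_def mem_bits_iff)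
    moreover have "length x0 = q"
      using x assms(1) by (simp add: x0_def mem_bits_iff)
    ultimately show ?thesis
      using fold_gate_apply_basis_state[OF assms(2) _ y] by (simp add: iqp_prob_def p_def w_def)
  qed
  finally show ?thesis by simp
qed

theorem lemma3:
  "\<exists>C::nat. \<forall>n q gates. iqp_circuit n q gates \<longrightarrow>
     (\<exists>m E b A B c.
        m \<le> C * (q + length gates + 1) ^ C \<and>
        simple_graph m E \<and> onb_bases m b \<and>
        (\<forall>x \<in> bits n. \<forall>y \<in> bits q.
           mbqc_prob q m n E b A B c x y = iqp_prob gates q x y))"
proof (rule exI[of _ 1], intro allI impI)
  fix n q gates
  assume "iqp_circuit n q gates"
  then have n: "n \<le> q" and gates: "\<forall>g\<in>set gates. length (snd g) = q"
    by (auto simp: iqp_circuit_def)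
  show "\<exists>m E b A B c.
      m \<le> 1 * (q + length gates + 1) ^ 1 \<and> simple_graph m E \<and> onb_bases m b \<and>
      (\<forall>x \<in> bits n. \<forall>y \<in> bits q. mbqc_prob q m n E b A B c x y = iqp_prob gates q x y)"
  proof (intro exI conjI ballI)
    show "q + length gates \<le> 1 * (q + length gates + 1) ^ 1" by simp
    show "simple_graph (q + length gates) (gate_graph q gates)"
      by (rule simple_graph_gate_graph)
    show "onb_bases (q + length gates) (gate_bases q gates)"
      by (rule onb_bases_gate_bases)
    fix x y
    assume "x \<in> bits n" and "y \<in> bits q"
    with n gates show "mbqc_prob q (q + length gates) n (gate_graph q gates) (gate_bases q gates)
        (correction_matrix q gates) (\<lambda>i j. i = j) (\<lambda>_. False) x y = iqp_prob gates q x y"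
      by (rule mbqc_prob_gate_graph)
  qed
qed

end
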